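(* Let $\mathbb{K}$ be a field, $n>1$, $a=\sum_{j=0}^d c_j s^j\in\mathbb{K}[s]^n$ a non-zero row vector of degree $d$ ($c_j\in\mathbb{K}^n$ row vectors), and $A\in\mathbb{K}^{(2d+1)\times n(d+1)}$ the matrix whose $(i,\,kn+r)$ entry ($1\le i\le 2d+1$, $0\le k\le d$, $1\le r\le n$) is the $r$-th entry of $c_{i-1-k}$ (zero if $i-1-k\notin\{0,\dots,d\}$). If $b_1,\dots,b_l$ is a basis of $\ker(A)$, then $\mathrm{syz}(a)=\langle b_1^\flat,\dots,b_l^\flat\rangle_{\mathbb{K}[s]}$.
   Context: For $v\in\mathbb{K}^{n(d+1)}$ written in blocks $v=[w_0;\dots;w_d]$ with $w_i\in\mathbb{K}^n$, $v^\flat=\sum_{i=0}^d s^i w_i\in\mathbb{K}[s]^n$. $\mathrm{syz}(a)=\{h\in\mathbb{K}[s]^n\mid a\,h=0\}$ ($h$ column vectors), and $\langle\cdot\rangle_{\mathbb{K}[s]}$ denotes the $\mathbb{K}[s]$-module generated. *)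

theory Defs
  imports "HOL-Computational_Algebra.Polynomial" "Jordan_Normal_Form.Matrix_Kernel"
begin

definition vec_degree :: "'a::zero poly vec \<Rightarrow> nat" where
  "vec_degree a = Max ((\<lambda>r. degree (a $ r)) ` {..<dim_vec a})"

text \<open>The (2d+1) x n(d+1) coefficient matrix, 0-indexed: row i (paper i+1),
  column k*n+r (paper column kn+(r+1)) holds entry r of c_(i-k), zero if i-k is not in 0..d.\<close>
definition coeff_matrix :: "nat \<Rightarrow> nat \<Rightarrow> 'a::zero poly vec \<Rightarrow> 'a mat" where
  "coeff_matrix n d a = mat (2*d+1) (n*(d+1))
     (\<lambda>(i,j). if j div n \<le> i \<and> i - j div n \<le> d then coeff (a $ (j mod n)) (i - j div n) else 0)"

definition flat :: "nat \<Rightarrow> nat \<Rightarrow> 'a::comm_semiring_1 vec \<Rightarrow> 'a poly vec" where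
  "flat n d v = vec n (\<lambda>r. \<Sum>i\<le>d. monom (v $ (i*n + r)) i)"

definition syz :: "'a::comm_semiring_1 poly vec \<Rightarrow> 'a poly vec set" where
  "syz a = {h \<in> carrier_vec (dim_vec a). a \<bullet> h = 0}"

definition poly_module_span :: "nat \<Rightarrow> 'a::comm_semiring_1 poly vec list \<Rightarrow> 'a poly vec set" where
  "poly_module_span n G = {h. \<exists>p :: nat \<Rightarrow> 'a poly. h = vec n (\<lambda>r. \<Sum>m<length G. p m * (G ! m) $ r)}"

end

theory Submission
  imports Defs
begin

text \<open>Write \<open>a = g b\<close> with \<open>g\<close> a generator of the ideal spanned by the entries of \<open>a\<close>, so
  that \<open>u \<bullet> b = 1\<close> for some \<open>u\<close>. Then every syzygy \<open>h\<close> of \<open>a\<close> is the combination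
  \<open>\<Sum>i j. u\<^sub>j h\<^sub>i (b\<^sub>j e\<^sub>i - b\<^sub>i e\<^sub>j)\<close> of Koszul syzygies of \<open>b\<close>, which have degree at most
  \<open>d = deg a\<close>; so \<open>syz a\<close> is generated by its elements of degree at most \<open>d\<close>. These are exactly
  the vectors \<open>v\<^sup>\<flat>\<close> with \<open>v \<in> ker A\<close>, because the entries of \<open>A v\<close> are the coefficients of
  \<open>a v\<^sup>\<flat>\<close>, a polynomial of degree at most \<open>2d\<close>. Finally \<open>v \<mapsto> v\<^sup>\<flat>\<close> is linear, so the
  flats of a basis of \<open>ker A\<close> generate.\<close>

lemma vec_bezout:
  fixes a :: "'a::euclidean_ring vec"
  assumes a: "a \<in> carrier_vec n" and a0: "a \<noteq> 0\<^sub>v n"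
  obtains g u where "g \<noteq> 0" "u \<in> carrier_vec n" "u \<bullet> a = g" "\<forall>j<n. g dvd a $ j"
proof -
  let ?P = "\<lambda>u. u \<in> carrier_vec n \<and> u \<bullet> a \<noteq> 0"
  obtain j0 where j0: "j0 < n" "a $ j0 \<noteq> 0"
    using a a0 by (metis eq_vecI carrier_vecD index_zero_vec)
  then have "?P (unit_vec n j0)"
    using a by simp
  then obtain u where u: "?P u" and min: "\<And>w. ?P w \<Longrightarrow> euclidean_size (u \<bullet> a) \<le> euclidean_size (w \<bullet> a)"
    using ex_has_least_nat[of ?P _ "\<lambda>u. euclidean_size (u \<bullet> a)"] by blast
  have "u \<bullet> a dvd a $ j" if j: "j < n" for j
  proof (rule ccontr)
    assume "\<not> u \<bullet> a dvd a $ j"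
    then have nz: "a $ j mod (u \<bullet> a) \<noteq> 0"
      by (simp add: dvd_eq_mod_eq_0)
    have "a $ j mod (u \<bullet> a) = (unit_vec n j - (a $ j div (u \<bullet> a)) \<cdot>\<^sub>v u) \<bullet> a"
      using a u j by (simp add: minus_scalar_prod_distrib[of _ n] minus_div_mult_eq_mod[symmetric] mult.commute)
    with nz u j have "euclidean_size (u \<bullet> a) \<le> euclidean_size (a $ j mod (u \<bullet> a))"
      by (metis min carrier_vecI index_minus_vec(2) index_smult_vec(2) carrier_vecD)
    with mod_size_less[of "u \<bullet> a" "a $ j"] u show False
      by simp
  qed
  with u show thesis
    using that by blast
qed

definition koszul_vec :: "'a::comm_ring_1 vec \<Rightarrow> nat \<Rightarrow> nat \<Rightarrow> 'a vec" where
  "koszul_vec b i j = b $ j \<cdot>\<^sub>v unit_vec (dim_vec b) i - b $ i \<cdot>\<^sub>v unit_vec (dim_vec b) j"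

lemma koszul_vec_carrier [simp]: "b \<in> carrier_vec n \<Longrightarrow> koszul_vec b i j \<in> carrier_vec n"
  by (simp add: koszul_vec_def)

lemma index_koszul_vec:
  "r < dim_vec b \<Longrightarrow> koszul_vec b i j $ r = (if r = i then b $ j else 0) - (if r = j then b $ i else 0)"
  by (simp add: koszul_vec_def unit_vec_def)

lemma scalar_prod_koszul_vec:
  assumes "i < dim_vec b" "j < dim_vec b"
  shows "b \<bullet> koszul_vec b i j = 0"
  using assms by (simp add: koszul_vec_def scalar_prod_minus_distrib[of _ "dim_vec b"] mult.commute)

lemma koszul_vec_decomposition:
  fixes b h u :: "'a::comm_ring_1 vec"
  assumes b: "b \<in> carrier_vec n" and h: "h \<in> carrier_vec n" and u: "u \<in> carrier_vec n"
    and unit: "u \<bullet> b = 1" and syz: "b \<bullet> h = 0"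
  shows "h = vec n (\<lambda>r. \<Sum>i<n. \<Sum>j<n. (u $ j * h $ i) * koszul_vec b i j $ r)"
proof (rule eq_vecI)
  fix r assume "r < dim_vec (vec n (\<lambda>r. \<Sum>i<n. \<Sum>j<n. (u $ j * h $ i) * koszul_vec b i j $ r))"
  then have r: "r < n" by simp
  have "(u $ j * h $ i) * koszul_vec b i j $ r
      = (if r = i then h $ r * (u $ j * b $ j) else 0) - (if r = j then u $ r * (b $ i * h $ i) else 0)"
    for i j using b r by (simp add: index_koszul_vec right_diff_distrib mult_ac)
  then have "(\<Sum>i<n. \<Sum>j<n. (u $ j * h $ i) * koszul_vec b i j $ r)
      = (\<Sum>i<n. \<Sum>j<n. (if r = i then h $ r * (u $ j * b $ j) else 0))
        - (\<Sum>i<n. \<Sum>j<n. (if r = j then u $ r * (b $ i * h $ i) else 0))"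
    by (simp add: sum_subtractf)
  also have "\<dots> = (\<Sum>j<n. h $ r * (u $ j * b $ j)) - (\<Sum>i<n. u $ r * (b $ i * h $ i))"
    using r by (subst sum.swap) simp
  also have "\<dots> = h $ r * (u \<bullet> b) - u $ r * (b \<bullet> h)"
    using b h by (simp add: scalar_prod_def sum_distrib_left lessThan_atLeast0)
  also have "\<dots> = h $ r"
    using unit syz by simp
  finally show "h $ r = vec n (\<lambda>r. \<Sum>i<n. \<Sum>j<n. (u $ j * h $ i) * koszul_vec b i j $ r) $ r"
    using r by simp
qed (use h in simp)

lemma poly_module_span_sum:
  assumes "finite I" and "\<And>i. i \<in> I \<Longrightarrow> w i \<in> poly_module_span n G"
  shows "vec n (\<lambda>r. \<Sum>i\<in>I. p i * w i $ r) \<in> poly_module_span n G"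
proof -
  have "\<forall>i\<in>I. \<exists>q. w i = vec n (\<lambda>r. \<Sum>m<length G. q m * G ! m $ r)"
    using assms(2) unfolding poly_module_span_def by blast
  then obtain q where q: "\<And>i. i \<in> I \<Longrightarrow> w i = vec n (\<lambda>r. \<Sum>m<length G. q i m * G ! m $ r)"
    by metis
  have "vec n (\<lambda>r. \<Sum>i\<in>I. p i * w i $ r)
      = vec n (\<lambda>r. \<Sum>m<length G. (\<Sum>i\<in>I. p i * q i m) * G ! m $ r)"
  proof (rule eq_vecI)
    fix r assume "r < dim_vec (vec n (\<lambda>r. \<Sum>m<length G. (\<Sum>i\<in>I. p i * q i m) * G ! m $ r))"
    then have "r < n" by simp
    then show "vec n (\<lambda>r. \<Sum>i\<in>I. p i * w i $ r) $ r
        = vec n (\<lambda>r. \<Sum>m<length G. (\<Sum>i\<in>I. p i * q i m) * G ! m $ r) $ r"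
      by (simp add: q sum_distrib_left sum_distrib_right mult.assoc sum.swap[of _ I] cong: sum.cong)
  qed simp
  then show ?thesis
    unfolding poly_module_span_def by (intro CollectI exI)
qed

lemma poly_module_span_subset_syz:
  assumes a: "a \<in> carrier_vec n" and G: "set G \<subseteq> syz a"
  shows "poly_module_span n G \<subseteq> syz a"
proof
  fix x assume "x \<in> poly_module_span n G"
  then obtain p where x: "x = vec n (\<lambda>r. \<Sum>m<length G. p m * G ! m $ r)"
    unfolding poly_module_span_def by blast
  have Gm: "dim_vec (G ! m) = n" "a \<bullet> G ! m = 0" if "m < length G" for m
    using G nth_mem[OF that] carrier_vecD[OF a] unfolding syz_def by auto
  have "a \<bullet> x = (\<Sum>r<n. a $ r * (\<Sum>m<length G. p m * G ! m $ r))"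
    using a x by (simp add: scalar_prod_def lessThan_atLeast0)
  also have "\<dots> = (\<Sum>m<length G. p m * (\<Sum>r<n. a $ r * G ! m $ r))"
    by (simp add: sum_distrib_left sum.swap[of _ "{..<n}"] mult.left_commute)
  also have "\<dots> = (\<Sum>m<length G. p m * (a \<bullet> G ! m))"
    using Gm(1) by (simp add: scalar_prod_def lessThan_atLeast0)
  also have "\<dots> = 0"
    using Gm(2) by simp
  finally show "x \<in> syz a"
    using a x unfolding syz_def by simp
qed

lemma syz_subset_poly_module_span:
  fixes a :: "'a::field poly vec"
  assumes a: "a \<in> carrier_vec n" "a \<noteq> 0\<^sub>v n" and deg: "\<forall>r<n. degree (a $ r) \<le> d"
    and low: "\<And>w. w \<in> syz a \<Longrightarrow> \<forall>r<n. degree (w $ r) \<le> d \<Longrightarrow> w \<in> poly_module_span n G"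
  shows "syz a \<subseteq> poly_module_span n G"
proof
  fix h assume "h \<in> syz a"
  then have h: "h \<in> carrier_vec n" "a \<bullet> h = 0"
    using a unfolding syz_def by auto
  obtain g u where g: "g \<noteq> 0" and u: "u \<in> carrier_vec n" "u \<bullet> a = g" and dvd: "\<forall>j<n. g dvd a $ j"
    using vec_bezout[OF a] .
  define b where "b = map_vec (\<lambda>x. x div g) a"
  have b: "b \<in> carrier_vec n"
    using a by (simp add: b_def)
  have ab: "a = g \<cdot>\<^sub>v b"
    using a dvd by (intro eq_vecI) (auto simp: b_def)
  have "g * (u \<bullet> b) = g * 1"
    using u b ab by (metis scalar_prod_smult_distrib mult_1_right)
  then have ub: "u \<bullet> b = 1"
    using g by simp
  have "g * (b \<bullet> h) = g * 0"
    using h b ab by (metis smult_scalar_prod_distrib mult_zero_right)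
  then have bh: "b \<bullet> h = 0"
    using g by simp
  have deg_b: "degree (b $ r) \<le> d" if "r < n" for r
  proof (cases "a $ r = 0")
    case False
    have "b $ r dvd a $ r"
      using ab b that by simp
    then show ?thesis
      using dvd_imp_degree_le[OF _ False] deg that by (meson order.trans)
  qed (use that carrier_vecD[OF a(1)] in \<open>simp add: b_def\<close>)
  have koszul: "koszul_vec b i j \<in> poly_module_span n G" if "i < n" "j < n" for i j
  proof (rule low)
    have "a \<bullet> koszul_vec b i j = g * (b \<bullet> koszul_vec b i j)"
      using ab b by (metis koszul_vec_carrier smult_scalar_prod_distrib)
    then show "koszul_vec b i j \<in> syz a"
      using a b that by (simp add: syz_def scalar_prod_koszul_vec)
    show "\<forall>r<n. degree (koszul_vec b i j $ r) \<le> d"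
      using b deg_b that by (auto simp: index_koszul_vec intro!: degree_diff_le)
  qed
  have "h = vec n (\<lambda>r. \<Sum>(i, j)\<in>{..<n} \<times> {..<n}. (u $ j * h $ i) * koszul_vec b i j $ r)"
    using koszul_vec_decomposition[OF b h(1) u(1) ub bh] by (simp add: sum.cartesian_product)
  also have "\<dots> \<in> poly_module_span n G"
    using poly_module_span_sum[of "{..<n} \<times> {..<n}" "\<lambda>(i, j). koszul_vec b i j" n G "\<lambda>(i, j). u $ j * h $ i"]
      koszul by (simp add: case_prod_beta' mem_Times_iff)
  finally show "h \<in> poly_module_span n G" .
qed

definition unflat :: "nat \<Rightarrow> nat \<Rightarrow> 'a::zero poly vec \<Rightarrow> 'a vec" where
  "unflat n d h = vec (n*(d+1)) (\<lambda>j. coeff (h $ (j mod n)) (j div n))"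

lemma block_index_less:
  fixes i r n d :: nat
  assumes "i \<le> d" "r < n"
  shows "i*n + r < n*(d+1)"
proof -
  have "i*n + r < i*n + n" using assms(2) by simp
  also have "\<dots> \<le> d*n + n" using assms(1) by simp
  finally show ?thesis by (simp add: algebra_simps)
qed

lemma sum_lessThan_mult_blocks:
  fixes n m :: nat
  shows "(\<Sum>j<n*m. f j) = (\<Sum>k<m. \<Sum>r<n. f (k*n + r))"
proof -
  have "(\<Sum>j\<in>{k*n..<k*n + n}. f j) = (\<Sum>r<n. f (k*n + r))" for k
    using sum.shift_bounds_nat_ivl[of f 0 "k*n" n] by (simp add: lessThan_atLeast0 add.commute)
  then show ?thesis
    using sum.nat_group[of f n m] by (simp add: mult.commute)
qed

lemma degree_flat_le: "r < n \<Longrightarrow> degree (flat n d v $ r) \<le> d"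
  by (auto simp: flat_def intro!: degree_sum_le order.trans[OF degree_monom_le])

lemma flat_unflat:
  assumes h: "h \<in> carrier_vec n" and deg: "\<forall>r<n. degree (h $ r) \<le> d"
  shows "flat n d (unflat n d h) = h"
proof (rule eq_vecI)
  fix r assume "r < dim_vec h"
  then have r: "r < n" using h by simp
  have "flat n d (unflat n d h) $ r = (\<Sum>i\<le>d. monom (coeff (h $ r) i) i)"
    using r block_index_less[OF _ r] by (simp add: flat_def unflat_def)
  also have "\<dots> = h $ r"
    using deg r by (intro poly_as_sum_of_monoms') auto
  finally show "flat n d (unflat n d h) $ r = h $ r" .
qed (use h in \<open>simp add: flat_def\<close>)

lemma index_coeff_matrix_mult_vec:
  fixes a :: "'a::comm_ring_1 poly vec"
  assumes a: "a \<in> carrier_vec n" and deg: "\<forall>r<n. degree (a $ r) \<le> d"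
    and v: "v \<in> carrier_vec (n*(d+1))" and i: "i < 2*d+1"
  shows "(coeff_matrix n d a *\<^sub>v v) $ i = coeff (a \<bullet> flat n d v) i"
proof -
  have "coeff (a \<bullet> flat n d v) i
      = (\<Sum>r<n. \<Sum>k\<le>d. (if i < k then 0 else v $ (k*n + r) * coeff (a $ r) (i - k)))"
    using a by (simp add: scalar_prod_def flat_def lessThan_atLeast0 coeff_sum sum_distrib_left
        coeff_monom_mult mult.commute[of "a $ _"])
  also have "\<dots> = (\<Sum>k\<le>d. \<Sum>r<n. (if k \<le> i \<and> i - k \<le> d then coeff (a $ r) (i - k) else 0) * v $ (k*n + r))"
  proof -
    have "k \<le> i \<Longrightarrow> \<not> i - k \<le> d \<Longrightarrow> coeff (a $ r) (i - k) = 0" if "r < n" for k r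
      using deg that by (intro coeff_eq_0) force
    then show ?thesis
      by (subst sum.swap) (auto intro!: sum.cong)
  qed
  also have "\<dots> = (\<Sum>k<d+1. \<Sum>r<n. coeff_matrix n d a $$ (i, k*n + r) * v $ (k*n + r))"
    using i by (intro sum.cong) (auto simp: coeff_matrix_def block_index_less[simplified])
  also have "\<dots> = (\<Sum>j<n*(d+1). coeff_matrix n d a $$ (i, j) * v $ j)"
    by (rule sum_lessThan_mult_blocks[symmetric])
  also have "\<dots> = (coeff_matrix n d a *\<^sub>v v) $ i"
    using i v by (simp add: coeff_matrix_def scalar_prod_def lessThan_atLeast0)
  finally show ?thesis ..
qed

lemma degree_scalar_prod_flat_le:
  assumes a: "a \<in> carrier_vec n" and deg: "\<forall>r<n. degree (a $ r) \<le> d"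
  shows "degree (a \<bullet> flat n d v) \<le> 2*d"
  unfolding scalar_prod_def
proof (intro degree_sum_le)
  fix r assume "r \<in> {0..<dim_vec (flat n d v)}"
  then have r: "r < n" by (simp add: flat_def)
  have "degree (a $ r * flat n d v $ r) \<le> degree (a $ r) + degree (flat n d v $ r)"
    by (rule degree_mult_le)
  also have "\<dots> \<le> 2*d"
    using deg degree_flat_le[OF r, of d v] r by fastforce
  finally show "degree (a $ r * flat n d v $ r) \<le> 2*d" .
qed simp

lemma mat_kernel_coeff_matrix:
  fixes a :: "'a::comm_ring_1 poly vec"
  assumes a: "a \<in> carrier_vec n" and deg: "\<forall>r<n. degree (a $ r) \<le> d"
  shows "v \<in> mat_kernel (coeff_matrix n d a) \<longleftrightarrow> v \<in> carrier_vec (n*(d+1)) \<and> a \<bullet> flat n d v = 0"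
proof -
  have A: "coeff_matrix n d a \<in> carrier_mat (2*d+1) (n*(d+1))"
    by (simp add: coeff_matrix_def)
  have "coeff_matrix n d a *\<^sub>v v = 0\<^sub>v (2*d+1) \<longleftrightarrow> a \<bullet> flat n d v = 0"
    if v: "v \<in> carrier_vec (n*(d+1))"
  proof
    assume "coeff_matrix n d a *\<^sub>v v = 0\<^sub>v (2*d+1)"
    then have low: "coeff (a \<bullet> flat n d v) i = 0" if "i < 2*d+1" for i
      using index_coeff_matrix_mult_vec[OF a deg v that] that by (metis index_zero_vec(1))
    show "a \<bullet> flat n d v = 0"
    proof (rule poly_eqI)
      fix i
      show "coeff (a \<bullet> flat n d v) i = coeff 0 i"
        using low[of i] coeff_eq_0[of "a \<bullet> flat n d v" i] degree_scalar_prod_flat_le[OF a deg, of v]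
        by (cases "i < 2*d+1") auto
    qed
  next
    assume "a \<bullet> flat n d v = 0"
    then show "coeff_matrix n d a *\<^sub>v v = 0\<^sub>v (2*d+1)"
      using A index_coeff_matrix_mult_vec[OF a deg v] by (intro eq_vecI) auto
  qed
  then show ?thesis
    using mat_kernel[OF A] by blast
qed

lemma flat_mult_mat_of_cols_in_poly_module_span:
  assumes bs: "set bs \<subseteq> carrier_vec (n*(d+1))"
  shows "flat n d (mat_of_cols (n*(d+1)) bs *\<^sub>v vec (length bs) c) \<in> poly_module_span n (map (flat n d) bs)"
proof -
  have "flat n d (mat_of_cols (n*(d+1)) bs *\<^sub>v vec (length bs) c) $ r
      = (\<Sum>m<length bs. [:c m:] * flat n d (bs ! m) $ r)" if r: "r < n" for r
  proof -
    have "flat n d (mat_of_cols (n*(d+1)) bs *\<^sub>v vec (length bs) c) $ r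
        = (\<Sum>i\<le>d. monom (\<Sum>m<length bs. c m * bs ! m $ (i*n + r)) i)"
      using r block_index_less[OF _ r]
      by (auto simp: flat_def mat_of_cols_def scalar_prod_def lessThan_atLeast0 mult.commute intro!: sum.cong)
    also have "\<dots> = (\<Sum>m<length bs. [:c m:] * (\<Sum>i\<le>d. monom (bs ! m $ (i*n + r)) i))"
      by (simp add: monom_sum smult_monom sum_distrib_left sum.swap[of _ "{..d}"])
    also have "\<dots> = (\<Sum>m<length bs. [:c m:] * flat n d (bs ! m) $ r)"
      using r by (simp add: flat_def)
    finally show ?thesis .
  qed
  then have "flat n d (mat_of_cols (n*(d+1)) bs *\<^sub>v vec (length bs) c)
      = vec n (\<lambda>r. \<Sum>m<length (map (flat n d) bs). [:c m:] * map (flat n d) bs ! m $ r)"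
    by (intro eq_vecI) (simp_all add: flat_def)
  then show ?thesis
    unfolding poly_module_span_def by (intro CollectI exI)
qed

lemma (in kernel) basis_coordinates:
  assumes "basis (set bs)" and "v \<in> mat_kernel A"
  obtains c where "v = mat_of_cols nc bs *\<^sub>v vec (length bs) c"
proof -
  have bs: "set bs \<subseteq> mat_kernel A" and span: "span (set bs) = mat_kernel A"
    using assms(1) unfolding Ker.basis_def by auto
  then have "set bs \<subseteq> carrier_vec nc"
    using mat_kernel_carrier[OF A] by blast
  then have "mat_kernel A = NC.span_list bs"
    using span span_same[OF bs] NC.span_list_as_span by simp
  then obtain c where "v = NC.lincomb_list c bs"
    using assms(2) unfolding NC.span_list_def by auto
  also have "\<dots> = mat_of_cols nc bs *\<^sub>v vec (length bs) c"
    using \<open>set bs \<subseteq> carrier_vec nc\<close> by (intro NC.lincomb_list_as_mat_mult) auto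
  finally show thesis
    using that by blast
qed

theorem lemma5:
  fixes a :: "'a::field poly vec" and n d :: nat and bs :: "'a vec list"
  assumes "n > 1"
    and "a \<in> carrier_vec n"
    and "a \<noteq> 0\<^sub>v n"
    and "d = vec_degree a"
    and "distinct bs"
    and "kernel.basis (n*(d+1)) (coeff_matrix n d a) (set bs)"
  shows "syz a = poly_module_span n (map (flat n d) bs)"
proof -
  have deg: "\<forall>r<n. degree (a $ r) \<le> d"
    using assms(2) unfolding assms(4) vec_degree_def by (auto intro: Max_ge)
  define A where "A = coeff_matrix n d a"
  interpret kernel "2*d+1" "n*(d+1)" A
    by unfold_locales (simp add: A_def coeff_matrix_def)
  have basis: "basis (set bs)"
    using assms(6) by (simp add: A_def)
  have kernel_iff: "v \<in> mat_kernel A \<longleftrightarrow> v \<in> carrier_vec (n*(d+1)) \<and> a \<bullet> flat n d v = 0" for v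
    unfolding A_def by (rule mat_kernel_coeff_matrix[OF assms(2) deg])
  have bs: "set bs \<subseteq> carrier_vec (n*(d+1))" "\<forall>b\<in>set bs. a \<bullet> flat n d b = 0"
    using basis kernel_iff unfolding Ker.basis_def by auto
  show ?thesis
  proof
    show "syz a \<subseteq> poly_module_span n (map (flat n d) bs)"
    proof (rule syz_subset_poly_module_span[OF assms(2,3) deg])
      fix w assume w: "w \<in> syz a" "\<forall>r<n. degree (w $ r) \<le> d"
      then have "w \<in> carrier_vec n" "flat n d (unflat n d w) = w"
        using assms(2) flat_unflat unfolding syz_def by auto
      with w(1) have "unflat n d w \<in> mat_kernel A"
        using kernel_iff unfolding syz_def by (simp add: unflat_def)
      then obtain c where "unflat n d w = mat_of_cols (n*(d+1)) bs *\<^sub>v vec (length bs) c"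
        using basis_coordinates[OF basis] by blast
      with \<open>flat n d (unflat n d w) = w\<close> show "w \<in> poly_module_span n (map (flat n d) bs)"
        using flat_mult_mat_of_cols_in_poly_module_span[OF bs(1)] by metis
    qed
    show "poly_module_span n (map (flat n d) bs) \<subseteq> syz a"
      using assms(2) bs(2) by (intro poly_module_span_subset_syz) (auto simp: syz_def flat_def)
  qed
qed

end
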